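(* Let $k$ be a field, $V$ an infinite-dimensional $k$-vector space, $E=\mathrm{End}_k(V)$, $S\subseteq E$ the two-sided ideal of endomorphisms of finite rank, and $R=k+S\subseteq E$ (where $k$ is identified with scalar multiples of the identity). Then the only two-sided ideals of $R$ are $0$, $S$ and $R$; $R$ is a prime ring which is both right and left almost perfect; the Jacobson radical $J(R)$ is $0$; and $R$ is not semilocal, hence is neither right perfect nor left perfect.
   Context: Rings are associative with identity. A ring $R$ is right (resp. left) almost perfect if $R/I$ is a right (resp. left) perfect ring for every two-sided ideal $I$ of $R$ with $I\neq 0$, $I\neq R$. A ring is semilocal if $R/J(R)$ is semisimple artinian. *)

theory Defs
  imports Main "HOL.Vector_Spaces" "HOL-Algebra.QuotRing"
begin

definition right_ideal :: "'a set \<Rightarrow> ('a, 'b) ring_scheme \<Rightarrow> bool" where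
  "right_ideal I R \<longleftrightarrow> additive_subgroup I R \<and>
     (\<forall>a\<in>I. \<forall>r\<in>carrier R. a \<otimes>\<^bsub>R\<^esub> r \<in> I)"

definition maximal_right_ideal :: "'a set \<Rightarrow> ('a, 'b) ring_scheme \<Rightarrow> bool" where
  "maximal_right_ideal I R \<longleftrightarrow> right_ideal I R \<and> I \<noteq> carrier R \<and>
     (\<forall>K. right_ideal K R \<and> I \<subseteq> K \<and> K \<noteq> carrier R \<longrightarrow> K = I)"

definition jacobson :: "('a, 'b) ring_scheme \<Rightarrow> 'a set" where
  "jacobson R = carrier R \<inter> \<Inter> {I. maximal_right_ideal I R}"

text \<open>Semisimple (artinian) ring: the right regular module R_R is semisimple,
  i.e. every right ideal is a direct summand of R_R.\<close>
definition semisimple_artinian :: "('a, 'b) ring_scheme \<Rightarrow> bool" where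
  "semisimple_artinian R \<longleftrightarrow>
     (\<forall>I. right_ideal I R \<longrightarrow>
        (\<exists>K. right_ideal K R \<and> I \<inter> K = {\<zero>\<^bsub>R\<^esub>} \<and>
             (\<forall>x\<in>carrier R. \<exists>a\<in>I. \<exists>b\<in>K. x = a \<oplus>\<^bsub>R\<^esub> b)))"

definition semilocal :: "('a, 'b) ring_scheme \<Rightarrow> bool" where
  "semilocal R \<longleftrightarrow> semisimple_artinian (R Quot (jacobson R))"

fun rprod :: "('a, 'b) ring_scheme \<Rightarrow> (nat \<Rightarrow> 'a) \<Rightarrow> nat \<Rightarrow> 'a" where
  "rprod R a 0 = a 0"
| "rprod R a (Suc n) = a (Suc n) \<otimes>\<^bsub>R\<^esub> rprod R a n"

fun lprod :: "('a, 'b) ring_scheme \<Rightarrow> (nat \<Rightarrow> 'a) \<Rightarrow> nat \<Rightarrow> 'a" where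
  "lprod R a 0 = a 0"
| "lprod R a (Suc n) = lprod R a n \<otimes>\<^bsub>R\<^esub> a (Suc n)"

text \<open>Bass: R is right perfect iff R/J is semisimple and J is T-nilpotent in the sense
  that a_n ... a_1 = 0 eventually (equivalently MJ \<noteq> M for every nonzero right module M);
  left perfect is the mirror image (a_1 ... a_n = 0 eventually).\<close>
definition right_perfect :: "('a, 'b) ring_scheme \<Rightarrow> bool" where
  "right_perfect R \<longleftrightarrow> semilocal R \<and>
     (\<forall>a. (\<forall>i. a i \<in> jacobson R) \<longrightarrow> (\<exists>n. rprod R a n = \<zero>\<^bsub>R\<^esub>))"

definition left_perfect :: "('a, 'b) ring_scheme \<Rightarrow> bool" where
  "left_perfect R \<longleftrightarrow> semilocal R \<and>
     (\<forall>a. (\<forall>i. a i \<in> jacobson R) \<longrightarrow> (\<exists>n. lprod R a n = \<zero>\<^bsub>R\<^esub>))"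

definition right_almost_perfect :: "('a, 'b) ring_scheme \<Rightarrow> bool" where
  "right_almost_perfect R \<longleftrightarrow>
     (\<forall>I. ideal I R \<and> I \<noteq> {\<zero>\<^bsub>R\<^esub>} \<and> I \<noteq> carrier R \<longrightarrow> right_perfect (R Quot I))"

definition left_almost_perfect :: "('a, 'b) ring_scheme \<Rightarrow> bool" where
  "left_almost_perfect R \<longleftrightarrow>
     (\<forall>I. ideal I R \<and> I \<noteq> {\<zero>\<^bsub>R\<^esub>} \<and> I \<noteq> carrier R \<longrightarrow> left_perfect (R Quot I))"

definition prime_ring :: "('a, 'b) ring_scheme \<Rightarrow> bool" where
  "prime_ring R \<longleftrightarrow> \<zero>\<^bsub>R\<^esub> \<noteq> \<one>\<^bsub>R\<^esub> \<and>
     (\<forall>A B. ideal A R \<and> ideal B R \<and> (\<forall>a\<in>A. \<forall>b\<in>B. a \<otimes>\<^bsub>R\<^esub> b = \<zero>\<^bsub>R\<^esub>)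
        \<longrightarrow> A = {\<zero>\<^bsub>R\<^esub>} \<or> B = {\<zero>\<^bsub>R\<^esub>})"

definition End_ring :: "('k::field \<Rightarrow> 'v::ab_group_add \<Rightarrow> 'v) \<Rightarrow> ('v \<Rightarrow> 'v) ring" where
  "End_ring scale = \<lparr>carrier = {f. Vector_Spaces.linear scale scale f},
     mult = (\<lambda>f g. f \<circ> g), one = id,
     zero = (\<lambda>_. 0), add = (\<lambda>f g x. f x + g x)\<rparr>"

definition finite_rank :: "('k::field \<Rightarrow> 'v::ab_group_add \<Rightarrow> 'v) \<Rightarrow> ('v \<Rightarrow> 'v) \<Rightarrow> bool" where
  "finite_rank scale f \<longleftrightarrow> (\<exists>B. finite B \<and> range f \<subseteq> module.span scale B)"

definition fin_rank_endos :: "('k::field \<Rightarrow> 'v::ab_group_add \<Rightarrow> 'v) \<Rightarrow> ('v \<Rightarrow> 'v) set" where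
  "fin_rank_endos scale = {f. Vector_Spaces.linear scale scale f \<and> finite_rank scale f}"

definition k_plus_S_ring :: "('k::field \<Rightarrow> 'v::ab_group_add \<Rightarrow> 'v) \<Rightarrow> ('v \<Rightarrow> 'v) ring" where
  "k_plus_S_ring scale = (End_ring scale)\<lparr>carrier :=
     {f. \<exists>c s. s \<in> fin_rank_endos scale \<and> f = (\<lambda>x. scale c x + s x)}\<rparr>"

end

theory Submission
  imports Defs
begin

text \<open>
  \<^item> every nonzero two-sided ideal contains all rank-one maps (matrix units), hence all
    of S, because a finite-rank map is a finite sum of matrix units composed with it;
  \<^item> modulo S every element of R is a scalar c \<cdot> id, so R/S is a division ring.

  From these: the ideals are 0, S, R; R is prime (S \<cdot> S \<noteq> 0); the only proper nonzero
  quotient R/S is a division ring, hence perfect on both sides.  The right ideals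
  M_b = {f. the b-th coordinate of f vanishes} (b a basis vector) are maximal and
  intersect to 0, so J(R) = 0.  Finally S is an essential proper right ideal, which a
  semisimple ring cannot have, and since J(R) = 0 semilocality of R would mean
  semisimplicity of R itself (R/0 \<cong> R).
\<close>

section \<open>General ring theory\<close>

lemma (in ring) ideal_imp_right_ideal: "ideal I R \<Longrightarrow> right_ideal I R"
  unfolding right_ideal_def by (auto dest: ideal.axioms(1) ideal.I_r_closed)

lemma (in ring) right_ideal_one_imp_carrier:
  assumes K: "right_ideal K R" and one: "\<one> \<in> K"
  shows "K = carrier R"
  using K one additive_subgroup.a_subset[of K R]
  by (force simp: right_ideal_def dest: bspec[of _ _ \<one>])

lemma right_ideal_iso_image:
  assumes A: "ring A" and B: "ring B" and h: "h \<in> ring_iso A B" and I: "right_ideal I A"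
  shows "right_ideal (h ` I) B"
proof -
  interpret ring_hom_ring A B h
    using ring_hom_ringI2[OF A B] h by (simp add: ring_iso_def)
  have surj: "h ` carrier A = carrier B"
    using h by (simp add: ring_iso_def bij_betw_def)
  have sg: "additive_subgroup I A" and I_sub: "I \<subseteq> carrier A"
    and cl: "\<And>a r. a \<in> I \<Longrightarrow> r \<in> carrier A \<Longrightarrow> a \<otimes>\<^bsub>A\<^esub> r \<in> I"
    using I additive_subgroup.a_subset by (auto simp: right_ideal_def)
  have "additive_subgroup (h ` I) B"
    using group_hom.subgroup_img_is_subgroup[OF a_group_hom additive_subgroup.a_subgroup[OF sg]]
    by (simp add: additive_subgroupI)
  moreover have "b \<otimes>\<^bsub>B\<^esub> r \<in> h ` I" if b: "b \<in> h ` I" and r: "r \<in> carrier B" for b r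
  proof -
    obtain a s where "a \<in> I" "b = h a" "s \<in> carrier A" "r = h s"
      using b r surj by (metis imageE)
    then show ?thesis using cl I_sub by (auto intro!: image_eqI[of _ h "a \<otimes>\<^bsub>A\<^esub> s"])
  qed
  ultimately show ?thesis by (simp add: right_ideal_def)
qed

text \<open>Semisimplicity is invariant under ring isomorphism: pull a right ideal back,
  take a complement there and push it forward.\<close>
lemma semisimple_artinian_iso:
  assumes A: "ring A" and B: "ring B" and iso: "A \<simeq> B" and ss: "semisimple_artinian A"
  shows "semisimple_artinian B"
  unfolding semisimple_artinian_def
proof (intro allI impI)
  fix I assume I: "right_ideal I B"
  obtain h where h: "h \<in> ring_iso A B" using iso by (auto simp: is_ring_iso_def)
  define g where "g = inv_into (carrier A) h"
  have g: "g \<in> ring_iso B A" unfolding g_def by (rule ring_iso_set_sym[OF A h])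
  interpret ring_hom_ring A B h
    using ring_hom_ringI2[OF A B] h by (simp add: ring_iso_def)
  have bij: "bij_betw h (carrier A) (carrier B)" using h by (simp add: ring_iso_def)
  have I_sub: "I \<subseteq> carrier B"
    using I additive_subgroup.a_subset by (auto simp: right_ideal_def)
  have hg: "h (g y) = y" if "y \<in> carrier B" for y
    using that bij by (simp add: g_def bij_betw_inv_into_right)
  have gh: "g (h x) = x" if "x \<in> carrier A" for x
    using that bij by (simp add: g_def bij_betw_inv_into_left)
  have gB: "g y \<in> carrier A" if "y \<in> carrier B" for y
    using that g by (rule ring_iso_memE(1)[rotated])
  obtain K where K: "right_ideal K A" "g ` I \<inter> K = {\<zero>\<^bsub>A\<^esub>}"
      and decomp: "\<forall>x\<in>carrier A. \<exists>a\<in>g ` I. \<exists>b\<in>K. x = a \<oplus>\<^bsub>A\<^esub> b"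
    using ss right_ideal_iso_image[OF B A g I] by (auto simp: semisimple_artinian_def)
  have K_sub: "K \<subseteq> carrier A"
    using K(1) additive_subgroup.a_subset by (auto simp: right_ideal_def)
  have hgI: "h ` g ` I = I"
    unfolding image_image using I_sub hg by (simp add: subset_iff cong: image_cong)
  have "I \<inter> h ` K = {\<zero>\<^bsub>B\<^esub>}"
  proof
    show "I \<inter> h ` K \<subseteq> {\<zero>\<^bsub>B\<^esub>}"
    proof
      fix y assume y: "y \<in> I \<inter> h ` K"
      then obtain k where k: "k \<in> K" "y = h k" by auto
      then have "k = g y" using K_sub gh by auto
      then have "k \<in> g ` I" using y by auto
      then have "k = \<zero>\<^bsub>A\<^esub>" using K(2) k(1) by auto
      then show "y \<in> {\<zero>\<^bsub>B\<^esub>}" using k by simp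
    qed
    have "\<zero>\<^bsub>A\<^esub> \<in> g ` I \<inter> K" using K(2) by blast
    then have "h \<zero>\<^bsub>A\<^esub> \<in> h ` g ` I \<inter> h ` K" by blast
    then show "{\<zero>\<^bsub>B\<^esub>} \<subseteq> I \<inter> h ` K" using hgI by simp
  qed
  moreover have "\<exists>a\<in>I. \<exists>b\<in>h ` K. y = a \<oplus>\<^bsub>B\<^esub> b" if y: "y \<in> carrier B" for y
  proof -
    obtain a b where ab: "a \<in> g ` I" "b \<in> K" "g y = a \<oplus>\<^bsub>A\<^esub> b"
      using decomp gB[OF y] by blast
    have "a \<in> carrier A" using ab(1) I_sub gB by auto
    moreover have "b \<in> carrier A" using ab(2) K_sub by auto
    ultimately have "y = h a \<oplus>\<^bsub>B\<^esub> h b" using ab(3) hg[OF y] by (metis hom_add)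
    then show ?thesis using ab hgI by blast
  qed
  ultimately show "\<exists>K. right_ideal K B \<and> I \<inter> K = {\<zero>\<^bsub>B\<^esub>} \<and>
      (\<forall>x\<in>carrier B. \<exists>a\<in>I. \<exists>b\<in>K. x = a \<oplus>\<^bsub>B\<^esub> b)"
    using right_ideal_iso_image[OF A B h K(1)] by blast
qed

text \<open>If J(R) = 0 then R/J(R) \<cong> R, so R is semilocal exactly when it is semisimple.\<close>
lemma (in ring) semilocal_iff_semisimple:
  assumes "jacobson R = {\<zero>}"
  shows "semilocal R \<longleftrightarrow> semisimple_artinian R"
proof -
  have Q: "ring (R Quot {\<zero>})" by (rule ideal.quotient_is_ring[OF zeroideal])
  show ?thesis unfolding semilocal_def assms
    using semisimple_artinian_iso[OF Q ring_axioms FactRing_zeroideal(1)]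
      semisimple_artinian_iso[OF ring_axioms Q FactRing_zeroideal(2)] by blast
qed

text \<open>In a semisimple ring an essential right ideal (one meeting every nonzero right
  ideal nontrivially) is the whole ring: its complement must be zero.\<close>
lemma semisimple_essential_right_ideal:
  assumes A: "ring A" and ss: "semisimple_artinian A" and I: "right_ideal I A"
    and essential: "\<And>K. right_ideal K A \<Longrightarrow> I \<inter> K = {\<zero>\<^bsub>A\<^esub>} \<Longrightarrow> K = {\<zero>\<^bsub>A\<^esub>}"
  shows "I = carrier A"
proof -
  interpret ring A by fact
  obtain K where K: "right_ideal K A" "I \<inter> K = {\<zero>\<^bsub>A\<^esub>}"
      and decomp: "\<forall>x\<in>carrier A. \<exists>a\<in>I. \<exists>b\<in>K. x = a \<oplus>\<^bsub>A\<^esub> b"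
    using ss I by (auto simp: semisimple_artinian_def)
  have "K = {\<zero>\<^bsub>A\<^esub>}" using essential K by blast
  have I_sub: "I \<subseteq> carrier A"
    using I additive_subgroup.a_subset by (auto simp: right_ideal_def)
  have "x \<in> I" if "x \<in> carrier A" for x
    using decomp that I_sub \<open>K = {\<zero>\<^bsub>A\<^esub>}\<close> by fastforce
  then show ?thesis using I_sub by blast
qed

text \<open>Rings in which every nonzero element has a right inverse (these are exactly the
  division rings, but only right inverses are needed here).\<close>
definition right_division_ring :: "('a, 'b) ring_scheme \<Rightarrow> bool" where
  "right_division_ring A \<longleftrightarrow> ring A \<and> \<zero>\<^bsub>A\<^esub> \<noteq> \<one>\<^bsub>A\<^esub> \<and>
     (\<forall>x\<in>carrier A - {\<zero>\<^bsub>A\<^esub>}. \<exists>y\<in>carrier A. x \<otimes>\<^bsub>A\<^esub> y = \<one>\<^bsub>A\<^esub>)"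

lemma right_division_ring_right_ideals:
  fixes A (structure)
  assumes D: "right_division_ring A" and I: "right_ideal I A"
  shows "I = {\<zero>\<^bsub>A\<^esub>} \<or> I = carrier A"
proof -
  interpret ring A using D by (simp add: right_division_ring_def)
  have sg: "additive_subgroup I A"
    and cl: "\<And>a r. a \<in> I \<Longrightarrow> r \<in> carrier A \<Longrightarrow> a \<otimes>\<^bsub>A\<^esub> r \<in> I"
    using I by (auto simp: right_ideal_def)
  have I_sub: "I \<subseteq> carrier A" by (rule additive_subgroup.a_subset[OF sg])
  have "carrier A \<subseteq> I" if x: "x \<in> I" "x \<noteq> \<zero>" for x
  proof -
    obtain y where "y \<in> carrier A" "x \<otimes> y = \<one>"
      using D x I_sub by (auto simp: right_division_ring_def)
    then have "\<one> \<in> I" using cl x(1) by metis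
    then show ?thesis using right_ideal_one_imp_carrier[OF I] by blast
  qed
  then show ?thesis using I_sub additive_subgroup.zero_closed[OF sg] by blast
qed

text \<open>Hence 0 is its only maximal right ideal, so its Jacobson radical is 0 \<dots>\<close>
lemma right_division_ring_jacobson:
  fixes A (structure)
  assumes D: "right_division_ring A"
  shows "jacobson A = {\<zero>\<^bsub>A\<^esub>}"
proof -
  interpret ring A using D by (simp add: right_division_ring_def)
  have "{\<zero>} \<noteq> carrier A"
    using D one_closed by (metis right_division_ring_def singletonD)
  then have "{I. maximal_right_ideal I A} = {{\<zero>\<^bsub>A\<^esub>}}"
    using right_division_ring_right_ideals[OF D] ideal_imp_right_ideal[OF zeroideal]
    unfolding maximal_right_ideal_def by auto
  then show ?thesis unfolding jacobson_def by auto
qed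

text \<open>\<dots> and it is semisimple, the complement of 0 being the whole ring and vice versa.\<close>
lemma right_division_ring_semisimple:
  fixes A (structure)
  assumes D: "right_division_ring A"
  shows "semisimple_artinian A"
  unfolding semisimple_artinian_def
proof (intro allI impI)
  interpret ring A using D by (simp add: right_division_ring_def)
  fix I assume "right_ideal I A"
  then consider "I = {\<zero>\<^bsub>A\<^esub>}" | "I = carrier A"
    using right_division_ring_right_ideals[OF D] by blast
  then show "\<exists>K. right_ideal K A \<and> I \<inter> K = {\<zero>\<^bsub>A\<^esub>} \<and>
      (\<forall>x\<in>carrier A. \<exists>a\<in>I. \<exists>b\<in>K. x = a \<oplus>\<^bsub>A\<^esub> b)"
  proof cases
    case 1
    then show ?thesis using ideal_imp_right_ideal[OF oneideal] by (intro exI[of _ "carrier A"]) force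
  next
    case 2
    then show ?thesis using ideal_imp_right_ideal[OF zeroideal] by (intro exI[of _ "{\<zero>}"]) force
  qed
qed

text \<open>So it is right and left perfect: semilocal, with the T-nilpotency condition holding
  trivially for the zero radical.\<close>
lemma right_division_ring_perfect:
  assumes D: "right_division_ring A"
  shows "right_perfect A" and "left_perfect A"
proof -
  interpret ring A using D by (simp add: right_division_ring_def)
  have "semilocal A"
    using semilocal_iff_semisimple right_division_ring_jacobson[OF D]
      right_division_ring_semisimple[OF D] by blast
  then show "right_perfect A" "left_perfect A"
    using right_division_ring_jacobson[OF D]
    unfolding right_perfect_def left_perfect_def by (auto intro!: exI[of _ 0])
qed

lemma (in ideal) quotient_right_division_ring:
  assumes one: "\<one> \<notin> I"
    and inv: "\<And>x. x \<in> carrier R \<Longrightarrow> x \<notin> I \<Longrightarrow> \<exists>y\<in>carrier R. x \<otimes> y \<ominus> \<one> \<in> I"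
  shows "right_division_ring (R Quot I)"
proof -
  have "I \<noteq> I +> \<one>" using a_rcos_self[of \<one>] one by auto
  moreover have "\<exists>Y\<in>carrier (R Quot I). X \<otimes>\<^bsub>R Quot I\<^esub> Y = \<one>\<^bsub>R Quot I\<^esub>"
    if X: "X \<in> carrier (R Quot I)" "X \<noteq> \<zero>\<^bsub>R Quot I\<^esub>" for X
  proof -
    from X obtain x where x: "x \<in> carrier R" "X = I +> x"
      by (auto simp: FactRing_def A_RCOSETS_def')
    have "x \<notin> I" using X x a_rcos_const by (auto simp: FactRing_def)
    then obtain y where y: "y \<in> carrier R" "x \<otimes> y \<ominus> \<one> \<in> I" using inv x by blast
    have "x \<otimes> y \<in> I +> \<one>"
      using a_rcos_module_minus[OF ring_axioms, of \<one> "x \<otimes> y"] y x by auto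
    then have "I +> \<one> = I +> (x \<otimes> y)" using a_repr_independence' by auto
    moreover have "X \<otimes>\<^bsub>R Quot I\<^esub> (I +> y) = I +> (x \<otimes> y)"
      using rcoset_mult_add[OF x(1) y(1)] x by (simp add: FactRing_def)
    moreover have "I +> y \<in> carrier (R Quot I)" using y by (auto simp: FactRing_def A_RCOSETS_def')
    ultimately show ?thesis by (auto simp: FactRing_def)
  qed
  ultimately show ?thesis using quotient_is_ring
    unfolding right_division_ring_def by (auto simp: FactRing_def)
qed

section \<open>Finite-rank maps and coordinates\<close>

context vector_space
begin

abbreviation lin :: "('b \<Rightarrow> 'b) \<Rightarrow> bool" where
  "lin f \<equiv> Vector_Spaces.linear scale scale f"

lemma lin_iff: "lin f \<longleftrightarrow> (\<forall>x y. f (x + y) = f x + f y) \<and> (\<forall>c x. f (c *s x) = c *s f x)"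
  using Vector_Spaces.linear_iff[of scale scale f] vector_space_axioms by auto

lemma lin_add: "lin f \<Longrightarrow> lin g \<Longrightarrow> lin (\<lambda>x. f x + g x)"
  unfolding lin_iff by (simp add: scale_right_distrib)

lemma lin_comp: "lin f \<Longrightarrow> lin g \<Longrightarrow> lin (\<lambda>x. f (g x))"
  unfolding lin_iff by simp

lemma lin_zero: "lin f \<Longrightarrow> f 0 = 0"
  unfolding lin_iff by (metis add_cancel_right_right)

lemma lin_scalar: "lin (\<lambda>x. c *s x)"
  unfolding lin_iff by (simp add: scale_right_distrib)

abbreviation fin_rank :: "('b \<Rightarrow> 'b) \<Rightarrow> bool" where
  "fin_rank f \<equiv> finite_rank scale f"

lemma fin_rank_add: "fin_rank f \<Longrightarrow> fin_rank g \<Longrightarrow> fin_rank (\<lambda>x. f x + g x)"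
  unfolding finite_rank_def
proof (elim exE conjE)
  fix B1 B2 assume "finite B1" "range f \<subseteq> span B1" "finite B2" "range g \<subseteq> span B2"
  then show "\<exists>B. finite B \<and> range (\<lambda>x. f x + g x) \<subseteq> span B"
    using span_mono[of B1 "B1 \<union> B2"] span_mono[of B2 "B1 \<union> B2"]
    by (intro exI[of _ "B1 \<union> B2"]) (auto intro!: span_add)
qed

lemma fin_rank_comp_left: "lin l \<Longrightarrow> fin_rank f \<Longrightarrow> fin_rank (\<lambda>x. l (f x))"
  unfolding finite_rank_def
proof (elim exE conjE)
  fix B assume l: "lin l" and "finite B" "range f \<subseteq> span B"
  then have "range (\<lambda>x. l (f x)) \<subseteq> span (l ` B)"
    using module_hom.span_image[of scale scale l B] module_hom_iff_linear by blast
  with \<open>finite B\<close> show "\<exists>B. finite B \<and> range (\<lambda>x. l (f x)) \<subseteq> span B" by blast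
qed

lemma fin_rank_comp_right: "fin_rank f \<Longrightarrow> fin_rank (\<lambda>x. f (g x))"
  unfolding finite_rank_def by auto

definition basis :: "'b set" where
  "basis = (SOME B. independent B \<and> span B = UNIV)"

lemma basis: "independent basis" "span basis = UNIV"
proof -
  obtain B where "independent B" "UNIV \<subseteq> span B" using basis_exists[of UNIV] by metis
  then have "\<exists>B. independent B \<and> span B = UNIV" by auto
  from someI_ex[OF this] show "independent basis" "span basis = UNIV"
    unfolding basis_def by auto
qed

definition coord :: "'b \<Rightarrow> 'b \<Rightarrow> 'a" where
  "coord x b = representation basis x b"

lemma coord_add: "coord (x + y) b = coord x b + coord y b"
  unfolding coord_def using representation_add[OF basis(1)] basis(2) by auto

lemma coord_scale: "coord (c *s x) b = c * coord x b"
  unfolding coord_def using representation_scale[OF basis(1)] basis(2) by auto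

lemma coord_diff: "coord (x - y) b = coord x b - coord y b"
  unfolding coord_def using representation_diff[OF basis(1)] basis(2) by auto

lemma coord_zero: "coord 0 b = 0"
  unfolding coord_def using representation_zero by auto

lemma coord_basis: "b' \<in> basis \<Longrightarrow> coord b' b = (if b = b' then 1 else 0)"
  unfolding coord_def using representation_basis[OF basis(1)] by auto

lemma coord_support_finite: "finite {b. coord x b \<noteq> 0}"
  unfolding coord_def by (rule finite_representation)

lemma coord_sum:
  assumes "finite F" "{b. coord x b \<noteq> 0} \<subseteq> F"
  shows "(\<Sum>b\<in>F. coord x b *s b) = x"
proof -
  have "(\<Sum>b\<in>F. coord x b *s b) = (\<Sum>b | coord x b \<noteq> 0. coord x b *s b)"
    by (rule sum.mono_neutral_cong_right) (use assms in auto)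
  also have "\<dots> = x" unfolding coord_def
    using sum_nonzero_representation_eq[OF basis(1)] basis(2) by auto
  finally show ?thesis .
qed

lemma coord_eq_zero: "(\<And>b. coord x b = 0) \<Longrightarrow> x = 0"
  using coord_sum[of "{}" x] by auto

lemma basis_nonzero: "b \<in> basis \<Longrightarrow> b \<noteq> 0"
  using basis(1) dependent_zero by blast

lemma coord_support_span:
  assumes "v \<in> span C" "coord v b \<noteq> 0"
  shows "\<exists>c\<in>C. coord c b \<noteq> 0"
proof -
  have "\<forall>b. coord v b \<noteq> 0 \<longrightarrow> (\<exists>c\<in>C. coord c b \<noteq> 0)"
    using assms(1)
  proof (induct rule: span_induct_alt)
    case base then show ?case by (simp add: coord_zero)
  next
    case (step c x y) then show ?case by (auto simp: coord_add coord_scale)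
  qed
  with assms(2) show ?thesis by blast
qed

lemma fin_rank_coord_support:
  assumes "fin_rank s"
  obtains F where "finite F" "\<And>x. {b. coord (s x) b \<noteq> 0} \<subseteq> F"
proof -
  from assms obtain C where C: "finite C" "range s \<subseteq> span C"
    by (auto simp: finite_rank_def)
  let ?F = "\<Union>c\<in>C. {b. coord c b \<noteq> 0}"
  have "finite ?F" using C(1) coord_support_finite by auto
  moreover have "{b. coord (s x) b \<noteq> 0} \<subseteq> ?F" for x
    using C(2) coord_support_span[of "s x" C] by blast
  ultimately show ?thesis using that by blast
qed

text \<open>The rank-one map x \<mapsto> x_b v, where x_b is the b-th coordinate of x
  (a matrix unit when v is a basis vector).\<close>
definition rank_one :: "'b \<Rightarrow> 'b \<Rightarrow> 'b \<Rightarrow> 'b" where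
  "rank_one b v = (\<lambda>x. coord x b *s v)"

lemma lin_rank_one: "lin (rank_one b v)"
  unfolding lin_iff rank_one_def by (simp add: coord_add coord_scale scale_left_distrib)

lemma fin_rank_rank_one: "fin_rank (rank_one b v)"
  unfolding finite_rank_def rank_one_def
  by (auto intro!: exI[of _ "{v}"] span_scale[OF span_base])

lemma rank_one_basis: "b' \<in> basis \<Longrightarrow> rank_one b v b' = (if b' = b then v else 0)"
  by (auto simp: rank_one_def coord_basis)

lemma lin_comp_rank_one: "lin f \<Longrightarrow> f (rank_one b v x) = rank_one b (f v) x"
  by (simp add: rank_one_def lin_iff)

lemma rank_one_comp_rank_one:
  "rank_one c w (rank_one b u x) = coord u c *s rank_one b w x"
  by (simp add: rank_one_def coord_scale)

section \<open>The ring R = k + S\<close>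

abbreviation RR :: "('b \<Rightarrow> 'b) ring" where "RR \<equiv> k_plus_S_ring scale"
abbreviation SS :: "('b \<Rightarrow> 'b) set" where "SS \<equiv> fin_rank_endos scale"

lemma carrier_RR: "carrier RR = {f. \<exists>c s. s \<in> SS \<and> f = (\<lambda>x. c *s x + s x)}"
  by (simp add: k_plus_S_ring_def End_ring_def)

lemma RR_simps [simp]:
  "mult RR = (\<lambda>f g. f \<circ> g)" "one RR = id" "zero RR = (\<lambda>_. 0)" "add RR = (\<lambda>f g x. f x + g x)"
  by (simp_all add: k_plus_S_ring_def End_ring_def)

lemma SS_iff: "s \<in> SS \<longleftrightarrow> lin s \<and> fin_rank s"
  by (simp add: fin_rank_endos_def)

lemma SS_add: "s \<in> SS \<Longrightarrow> t \<in> SS \<Longrightarrow> (\<lambda>x. s x + t x) \<in> SS"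
  by (simp add: SS_iff lin_add fin_rank_add)

lemma SS_comp_left: "lin l \<Longrightarrow> s \<in> SS \<Longrightarrow> (\<lambda>x. l (s x)) \<in> SS"
  by (simp add: SS_iff lin_comp fin_rank_comp_left)

lemma SS_comp_right: "lin l \<Longrightarrow> s \<in> SS \<Longrightarrow> (\<lambda>x. s (l x)) \<in> SS"
  by (simp add: SS_iff lin_comp fin_rank_comp_right)

lemma SS_scale: "s \<in> SS \<Longrightarrow> (\<lambda>x. c *s s x) \<in> SS"
  using SS_comp_left[OF lin_scalar] .

lemma rank_one_in_SS: "rank_one b v \<in> SS"
  by (simp add: SS_iff lin_rank_one fin_rank_rank_one)

lemma SS_zero: "(\<lambda>x. 0) \<in> SS"
  using rank_one_in_SS[of _ 0] by (simp add: rank_one_def)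

lemma SS_neg: "s \<in> SS \<Longrightarrow> (\<lambda>x. - s x) \<in> SS"
  using SS_scale[of s "-1"] by (simp add: scale_minus_left)

lemma SS_subset_RR: "s \<in> SS \<Longrightarrow> s \<in> carrier RR"
  unfolding carrier_RR by (auto intro!: exI[of _ 0] exI[of _ s])

lemma lin_RR: "f \<in> carrier RR \<Longrightarrow> lin f"
  unfolding carrier_RR by (auto simp: SS_iff intro!: lin_add lin_scalar)

lemma scalar_in_RR: "(\<lambda>x. c *s x) \<in> carrier RR"
  unfolding carrier_RR using SS_zero by (auto intro!: exI[of _ c] exI[of _ "\<lambda>x. 0"])

lemma id_in_RR: "(\<lambda>x. x) \<in> carrier RR"
  using scalar_in_RR[of 1] by simp

lemma RR_add: "f \<in> carrier RR \<Longrightarrow> g \<in> carrier RR \<Longrightarrow> (\<lambda>x. f x + g x) \<in> carrier RR"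
  unfolding carrier_RR
proof clarsimp
  fix c s d t assume "s \<in> SS" "t \<in> SS"
  then show "\<exists>e u. u \<in> SS \<and> (\<lambda>x. c *s x + s x + (d *s x + t x)) = (\<lambda>x. e *s x + u x)"
    by (intro exI[of _ "c + d"] exI[of _ "\<lambda>x. s x + t x"])
       (auto simp: SS_add scale_left_distrib algebra_simps)
qed

lemma RR_neg: "f \<in> carrier RR \<Longrightarrow> (\<lambda>x. - f x) \<in> carrier RR"
  unfolding carrier_RR
proof clarsimp
  fix c s assume "s \<in> SS"
  then show "\<exists>e u. u \<in> SS \<and> (\<lambda>x. - (c *s x) - s x) = (\<lambda>x. e *s x + u x)"
    by (intro exI[of _ "-c"] exI[of _ "\<lambda>x. - s x"]) (auto simp: SS_neg scale_minus_left)
qed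

lemma RR_mult: "f \<in> carrier RR \<Longrightarrow> g \<in> carrier RR \<Longrightarrow> (\<lambda>x. f (g x)) \<in> carrier RR"
  unfolding carrier_RR
proof clarsimp
  fix c s d t assume s: "s \<in> SS" and t: "t \<in> SS"
  have "lin (\<lambda>x. d *s x + t x)" using t by (auto simp: SS_iff intro!: lin_add lin_scalar)
  then have "(\<lambda>x. c *s t x + s (d *s x + t x)) \<in> SS"
    by (rule SS_add[OF SS_scale[OF t] SS_comp_right[OF _ s]])
  moreover have "(\<lambda>x. c *s (d *s x + t x) + s (d *s x + t x))
      = (\<lambda>x. (c * d) *s x + (c *s t x + s (d *s x + t x)))"
    by (auto simp: scale_right_distrib)
  ultimately show "\<exists>e u. u \<in> SS \<and>
      (\<lambda>x. c *s (d *s x + t x) + s (d *s x + t x)) = (\<lambda>x. e *s x + u x)"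
    by blast
qed

lemma ring_RR: "ring RR"
proof (rule ringI)
  show "abelian_group RR"
  proof (rule abelian_groupI)
    fix f assume "f \<in> carrier RR"
    then show "\<exists>g\<in>carrier RR. g \<oplus>\<^bsub>RR\<^esub> f = \<zero>\<^bsub>RR\<^esub>"
      by (intro bexI[of _ "\<lambda>x. - f x"]) (auto simp: RR_neg)
  qed (auto simp: RR_add SS_zero SS_subset_RR add.assoc add.commute)
  show "monoid RR"
    by (rule monoidI)
      (auto simp: RR_mult[unfolded comp_def[symmetric]] id_in_RR[unfolded id_def[symmetric]])
  fix x y z assume "x \<in> carrier RR" "y \<in> carrier RR" "z \<in> carrier RR"
  then show "(x \<oplus>\<^bsub>RR\<^esub> y) \<otimes>\<^bsub>RR\<^esub> z = x \<otimes>\<^bsub>RR\<^esub> z \<oplus>\<^bsub>RR\<^esub> y \<otimes>\<^bsub>RR\<^esub> z"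
    "z \<otimes>\<^bsub>RR\<^esub> (x \<oplus>\<^bsub>RR\<^esub> y) = z \<otimes>\<^bsub>RR\<^esub> x \<oplus>\<^bsub>RR\<^esub> z \<otimes>\<^bsub>RR\<^esub> y"
    using lin_RR[of z] by (auto simp: lin_iff)
qed

lemma RR_a_inv: "f \<in> carrier RR \<Longrightarrow> \<ominus>\<^bsub>RR\<^esub> f = (\<lambda>x. - f x)"
  by (rule abelian_group.minus_equality[OF ring.is_abelian_group[OF ring_RR]])
    (auto simp: RR_neg)

lemma ideal_SS: "ideal SS RR"
proof (rule idealI[OF ring_RR])
  interpret ring RR by (rule ring_RR)
  show "subgroup SS (add_monoid RR)"
    by (rule add.subgroupI) (use SS_zero in \<open>auto simp: SS_subset_RR SS_add RR_a_inv SS_neg\<close>)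
  fix a x assume "a \<in> SS" "x \<in> carrier RR"
  then show "x \<otimes>\<^bsub>RR\<^esub> a \<in> SS" "a \<otimes>\<^bsub>RR\<^esub> x \<in> SS"
    using lin_RR[of x] by (auto simp: comp_def intro: SS_comp_left SS_comp_right)
qed

section \<open>Ideals and maximal right ideals of R\<close>

lemma additive_subgroup_RR_sum:
  assumes I: "additive_subgroup I RR" and "finite F" and "\<And>b. b \<in> F \<Longrightarrow> g b \<in> I"
  shows "(\<lambda>x. \<Sum>b\<in>F. g b x) \<in> I"
  using assms(2,3)
proof (induct F rule: finite_induct)
  case empty
  then show ?case using additive_subgroup.zero_closed[OF I] by simp
next
  case (insert b F)
  then have "g b \<oplus>\<^bsub>RR\<^esub> (\<lambda>x. \<Sum>b\<in>F. g b x) \<in> I"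
    by (intro additive_subgroup.a_closed[OF I]) auto
  then show ?case using insert by simp
qed

lemma SS_sum_rank_one:
  assumes "s \<in> SS"
  obtains F where "finite F" "s = (\<lambda>x. \<Sum>b\<in>F. rank_one b b (s x))"
proof -
  obtain F where F: "finite F" "\<And>x. {b. coord (s x) b \<noteq> 0} \<subseteq> F"
    using fin_rank_coord_support assms by (auto simp: SS_iff)
  then have "s = (\<lambda>x. \<Sum>b\<in>F. rank_one b b (s x))"
    using coord_sum[OF F(1) F(2)] by (auto simp: rank_one_def)
  with F(1) show ?thesis using that by blast
qed

lemma rank_one_in_ideal:
  assumes I: "ideal I RR" and f: "f \<in> I" and fu: "f u \<noteq> 0"
  shows "rank_one b v \<in> I"
proof -
  interpret ideal I RR by fact
  have f_lin: "lin f" using f a_subset lin_RR by auto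
  obtain c where c: "coord (f u) c \<noteq> 0" using coord_eq_zero fu by blast
  define L where "L = rank_one c (inverse (coord (f u) c) *s v)"
  have "L \<otimes>\<^bsub>RR\<^esub> (f \<otimes>\<^bsub>RR\<^esub> rank_one b u) \<in> I"
    using I_l_closed I_r_closed f SS_subset_RR rank_one_in_SS unfolding L_def by metis
  moreover have "L \<otimes>\<^bsub>RR\<^esub> (f \<otimes>\<^bsub>RR\<^esub> rank_one b u) = rank_one b v"
  proof
    fix x
    have "(L \<otimes>\<^bsub>RR\<^esub> (f \<otimes>\<^bsub>RR\<^esub> rank_one b u)) x
        = coord (f u) c *s rank_one b (inverse (coord (f u) c) *s v) x"
      by (simp add: L_def lin_comp_rank_one[OF f_lin] rank_one_comp_rank_one)
    also have "\<dots> = rank_one b v x"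
      using c by (simp add: rank_one_def)
    finally show "(L \<otimes>\<^bsub>RR\<^esub> (f \<otimes>\<^bsub>RR\<^esub> rank_one b u)) x = rank_one b v x" .
  qed
  ultimately show ?thesis by simp
qed

lemma SS_subset_ideal:
  assumes I: "ideal I RR" and nonzero: "I \<noteq> {\<zero>\<^bsub>RR\<^esub>}"
  shows "SS \<subseteq> I"
proof
  interpret ideal I RR by fact
  fix s assume s: "s \<in> SS"
  obtain f where f: "f \<in> I" "f \<noteq> (\<lambda>_. 0)"
    using nonzero additive_subgroup.zero_closed[OF is_additive_subgroup] by auto
  then obtain u where "f u \<noteq> 0" by auto
  then have "rank_one b b \<otimes>\<^bsub>RR\<^esub> s \<in> I" for b
    using I_r_closed rank_one_in_ideal[OF I f(1)] SS_subset_RR[OF s] by blast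
  moreover obtain F where "finite F" "s = (\<lambda>x. \<Sum>b\<in>F. rank_one b b (s x))"
    using SS_sum_rank_one[OF s] .
  ultimately show "s \<in> I"
    using additive_subgroup_RR_sum[OF is_additive_subgroup, of F "\<lambda>b. rank_one b b \<circ> s"] by simp
qed

lemma RR_outside_SS:
  assumes "f \<in> carrier RR" "f \<notin> SS"
  obtains c t where "c \<noteq> 0" "t \<in> SS" "f = (\<lambda>x. c *s x + t x)"
proof -
  obtain c t where ct: "t \<in> SS" "f = (\<lambda>x. c *s x + t x)"
    using assms(1) unfolding carrier_RR by blast
  moreover have "c \<noteq> 0" using ct assms(2) by auto
  ultimately show ?thesis using that by blast
qed

text \<open>An ideal containing S and some map outside S contains c \<cdot> id + t with c \<noteq> 0
  and t \<in> S, hence c \<cdot> id and the unit.\<close>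
lemma ideal_beyond_SS:
  assumes I: "ideal I RR" and SS_I: "SS \<subseteq> I" and g: "g \<in> I" "g \<notin> SS"
  shows "I = carrier RR"
proof -
  interpret ideal I RR by fact
  obtain c t where ct: "c \<noteq> 0" "t \<in> SS" "g = (\<lambda>x. c *s x + t x)"
    using RR_outside_SS g a_subset by blast
  have "(\<lambda>x. - t x) \<in> I" using SS_I ct(2) SS_neg by blast
  then have "g \<oplus>\<^bsub>RR\<^esub> (\<lambda>x. - t x) \<in> I"
    using g(1) by (intro additive_subgroup.a_closed[OF is_additive_subgroup])
  then have "(\<lambda>x. c *s x) \<in> I" using ct(3) by simp
  then have "(\<lambda>x. inverse c *s x) \<otimes>\<^bsub>RR\<^esub> (\<lambda>x. c *s x) \<in> I"
    using I_l_closed scalar_in_RR by blast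
  then have "\<one>\<^bsub>RR\<^esub> \<in> I" using ct(1) by (simp add: comp_def id_def)
  then show ?thesis by (rule one_imp_carrier)
qed

lemma ideal_cases:
  assumes I: "ideal I RR"
  shows "I = {\<zero>\<^bsub>RR\<^esub>} \<or> I = SS \<or> I = carrier RR"
proof (cases "I = {\<zero>\<^bsub>RR\<^esub>}")
  case False
  then have "SS \<subseteq> I" by (rule SS_subset_ideal[OF I])
  then show ?thesis using ideal_beyond_SS[OF I] by blast
qed simp

lemma ideals_RR: "{I. ideal I RR} = {{\<zero>\<^bsub>RR\<^esub>}, SS, carrier RR}"
proof -
  interpret ring RR by (rule ring_RR)
  show ?thesis using ideal_cases zeroideal oneideal ideal_SS by auto
qed

definition coord_kernel :: "'b \<Rightarrow> ('b \<Rightarrow> 'b) set" where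
  "coord_kernel b = {f \<in> carrier RR. \<forall>x. coord (f x) b = 0}"

lemma coord_kernel_right_ideal: "right_ideal (coord_kernel b) RR"
proof -
  interpret ring RR by (rule ring_RR)
  have coord_neg: "coord (- v) b = - coord v b" for v
    using coord_diff[of 0 v b] by (simp add: coord_zero)
  have "subgroup (coord_kernel b) (add_monoid RR)"
    by (rule add.subgroupI) (use SS_subset_RR[OF SS_zero] in
        \<open>auto simp: coord_kernel_def RR_a_inv RR_neg RR_add coord_add coord_zero coord_neg\<close>)
  then show ?thesis unfolding right_ideal_def
    by (auto intro: additive_subgroupI simp: coord_kernel_def RR_mult[unfolded comp_def[symmetric]])
qed

lemma id_minus_rank_one_in_coord_kernel:
  assumes "coord w b = 1"
  shows "(\<lambda>x. x + - rank_one b w x) \<in> coord_kernel b"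
proof -
  have "coord (x + - rank_one b w x) b = 0" for x
    using assms coord_diff[of x "rank_one b w x" b] by (simp add: rank_one_def coord_scale)
  then show ?thesis
    using RR_add[OF id_in_RR RR_neg[OF SS_subset_RR[OF rank_one_in_SS]]]
    by (simp add: coord_kernel_def)
qed

text \<open>For a basis vector b the right ideal M_b is maximal: if f \<in> K has f u with
  nonzero b-coordinate, composing f with a rank-one map yields a rank-one map e in K
  with id - e \<in> M_b, hence id \<in> K.\<close>
lemma coord_kernel_maximal:
  assumes b: "b \<in> basis"
  shows "maximal_right_ideal (coord_kernel b) RR"
  unfolding maximal_right_ideal_def
proof (intro conjI allI impI)
  interpret ring RR by (rule ring_RR)
  show "right_ideal (coord_kernel b) RR" by (rule coord_kernel_right_ideal)
  have "coord b b = 1" using b by (simp add: coord_basis)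
  then have "(\<lambda>x. x) \<notin> coord_kernel b" by (auto simp: coord_kernel_def intro!: exI[of _ b])
  then show "coord_kernel b \<noteq> carrier RR" using id_in_RR by blast
  fix K assume K: "right_ideal K RR \<and> coord_kernel b \<subseteq> K \<and> K \<noteq> carrier RR"
  have sg: "additive_subgroup K RR"
    and cl: "\<And>a r. a \<in> K \<Longrightarrow> r \<in> carrier RR \<Longrightarrow> a \<otimes>\<^bsub>RR\<^esub> r \<in> K"
    using K by (auto simp: right_ideal_def)
  have "f \<in> coord_kernel b" if f: "f \<in> K" for f
  proof (rule ccontr)
    assume "f \<notin> coord_kernel b"
    moreover have f_RR: "f \<in> carrier RR" using f additive_subgroup.a_subset[OF sg] by auto
    ultimately obtain u where u: "coord (f u) b \<noteq> 0" by (auto simp: coord_kernel_def)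
    define w where "w = inverse (coord (f u) b) *s f u"
    have "f \<otimes>\<^bsub>RR\<^esub> rank_one b (inverse (coord (f u) b) *s u) \<in> K"
      using cl[OF f SS_subset_RR[OF rank_one_in_SS]] .
    moreover have "f \<otimes>\<^bsub>RR\<^esub> rank_one b (inverse (coord (f u) b) *s u) = rank_one b w"
      using lin_RR[OF f_RR] by (auto simp: lin_comp_rank_one w_def lin_iff)
    moreover have "coord w b = 1" using u by (simp add: w_def coord_scale)
    then have "(\<lambda>x. x + - rank_one b w x) \<in> K"
      using id_minus_rank_one_in_coord_kernel K by blast
    ultimately have "(\<lambda>x. x + - rank_one b w x) \<oplus>\<^bsub>RR\<^esub> rank_one b w \<in> K"
      using additive_subgroup.a_closed[OF sg] by metis
    moreover have "(\<lambda>x. x + - rank_one b w x) \<oplus>\<^bsub>RR\<^esub> rank_one b w = \<one>\<^bsub>RR\<^esub>"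
      by (simp add: id_def)
    ultimately have "\<one>\<^bsub>RR\<^esub> \<in> K" by simp
    then show False using right_ideal_one_imp_carrier K by blast
  qed
  then show "K = coord_kernel b" using K by blast
qed

text \<open>The coordinate kernels already intersect to zero, so J(R) = 0.\<close>
lemma jacobson_RR: "jacobson RR = {\<zero>\<^bsub>RR\<^esub>}"
proof
  show "jacobson RR \<subseteq> {\<zero>\<^bsub>RR\<^esub>}"
  proof
    fix f assume f: "f \<in> jacobson RR"
    have "coord (f x) b = 0" for x b
    proof (cases "b \<in> basis")
      case True
      then show ?thesis
        using f coord_kernel_maximal unfolding jacobson_def coord_kernel_def by blast
    next
      case False
      then show ?thesis unfolding coord_def using representation_ne_zero by blast
    qed
    then show "f \<in> {\<zero>\<^bsub>RR\<^esub>}" using coord_eq_zero by auto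
  qed
  interpret ring RR by (rule ring_RR)
  show "{\<zero>\<^bsub>RR\<^esub>} \<subseteq> jacobson RR"
    unfolding jacobson_def maximal_right_ideal_def right_ideal_def
    using additive_subgroup.zero_closed by fastforce
qed

lemma SS_essential:
  assumes K: "right_ideal K RR" and disjoint: "SS \<inter> K = {\<zero>\<^bsub>RR\<^esub>}"
  shows "K = {\<zero>\<^bsub>RR\<^esub>}"
proof (rule ccontr)
  assume "K \<noteq> {\<zero>\<^bsub>RR\<^esub>}"
  then obtain t where t: "t \<in> K" "t \<noteq> (\<lambda>_. 0)" using disjoint by auto
  have t_RR: "t \<in> carrier RR"
    using K t(1) additive_subgroup.a_subset by (auto simp: right_ideal_def)
  obtain v where v: "t v \<noteq> 0" using t(2) by auto
  then have "v \<noteq> 0" using lin_zero[OF lin_RR[OF t_RR]] by auto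
  then obtain b where b: "coord v b \<noteq> 0" using coord_eq_zero by blast
  have "t \<otimes>\<^bsub>RR\<^esub> rank_one b v \<in> K"
    using K t(1) SS_subset_RR[OF rank_one_in_SS] by (auto simp: right_ideal_def)
  moreover have "t \<otimes>\<^bsub>RR\<^esub> rank_one b v \<in> SS"
    using SS_comp_left[OF lin_RR[OF t_RR] rank_one_in_SS] by (simp add: comp_def)
  ultimately have "t \<otimes>\<^bsub>RR\<^esub> rank_one b v = (\<lambda>_. 0)" using disjoint by auto
  then have "t (rank_one b v v) = 0" by (metis RR_simps(1) comp_apply)
  moreover have "t (rank_one b v v) = coord v b *s t v"
    using lin_RR[OF t_RR] by (simp add: rank_one_def lin_iff)
  ultimately show False using b v by simp
qed

end

section \<open>The infinite-dimensional case\<close>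

text \<open>From now on V is infinite-dimensional; this is what keeps id out of S.\<close>
locale infinite_dimensional_vector_space = vector_space +
  assumes infinite_dimensional: "\<not> (\<exists>B. finite B \<and> span B = UNIV)"
begin

lemma id_notin_SS: "(\<lambda>x. x) \<notin> SS"
proof
  assume "(\<lambda>x. x) \<in> SS"
  then obtain B where B: "finite B" "range (\<lambda>x. x) \<subseteq> span B"
    by (auto simp: SS_iff finite_rank_def)
  then have "span B = UNIV" by auto
  then show False using B(1) infinite_dimensional by blast
qed

lemma basis_nonempty: obtains b where "b \<in> basis"
proof -
  have "basis \<noteq> {}"
  proof
    assume "basis = {}"
    then have "finite basis" "span basis = UNIV" using basis(2) by simp_all
    then show False using infinite_dimensional by blast
  qed
  then show ?thesis using that by blast
qed

text \<open>Modulo S every element of R is a scalar, so R/S is a division ring.\<close>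
lemma quotient_SS_right_division_ring: "right_division_ring (RR Quot SS)"
proof (rule ideal.quotient_right_division_ring[OF ideal_SS])
  show "\<one>\<^bsub>RR\<^esub> \<notin> SS" using id_notin_SS by (simp add: id_def)
  fix f assume f: "f \<in> carrier RR" "f \<notin> SS"
  then obtain c t where ct: "c \<noteq> 0" "t \<in> SS" "f = (\<lambda>x. c *s x + t x)"
    by (rule RR_outside_SS)
  have "f \<otimes>\<^bsub>RR\<^esub> (\<lambda>x. inverse c *s x) \<ominus>\<^bsub>RR\<^esub> \<one>\<^bsub>RR\<^esub> = (\<lambda>x. t (inverse c *s x))"
    using ct RR_a_inv[OF id_in_RR] by (simp add: a_minus_def id_def comp_def)
  moreover have "(\<lambda>x. t (inverse c *s x)) \<in> SS" by (rule SS_comp_right[OF lin_scalar ct(2)])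
  ultimately show "\<exists>g\<in>carrier RR. f \<otimes>\<^bsub>RR\<^esub> g \<ominus>\<^bsub>RR\<^esub> \<one>\<^bsub>RR\<^esub> \<in> SS"
    using scalar_in_RR by metis
qed

text \<open>The only proper nonzero ideal is S, and R/S is a division ring, hence perfect:
  R is right and left almost perfect.\<close>
lemma RR_almost_perfect: "right_almost_perfect RR" "left_almost_perfect RR"
proof -
  have "I = SS" if "ideal I RR" "I \<noteq> {\<zero>\<^bsub>RR\<^esub>}" "I \<noteq> carrier RR" for I
    using ideal_cases[OF that(1)] that by auto
  then show "right_almost_perfect RR" "left_almost_perfect RR"
    unfolding right_almost_perfect_def left_almost_perfect_def
    using right_division_ring_perfect[OF quotient_SS_right_division_ring] by auto
qed

text \<open>R is prime: two nonzero ideals both contain S, and S \<cdot> S \<noteq> 0 since a matrix unit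
  is a nonzero idempotent.\<close>
lemma prime_RR: "prime_ring RR"
  unfolding prime_ring_def
proof (intro conjI allI impI)
  obtain b where b: "b \<in> basis" by (rule basis_nonempty)
  then have unit_b: "rank_one b b (rank_one b b b) = b" by (simp add: rank_one_basis)
  show "\<zero>\<^bsub>RR\<^esub> \<noteq> \<one>\<^bsub>RR\<^esub>"
  proof
    assume "\<zero>\<^bsub>RR\<^esub> = \<one>\<^bsub>RR\<^esub>"
    then have "(\<lambda>_. 0) = (\<lambda>x::'b. x)" by (simp add: id_def)
    then have "(\<lambda>_. (0::'b)) b = (\<lambda>x. x) b" by (rule fun_cong)
    then show False using basis_nonzero[OF b] by simp
  qed
  fix A B
  assume AB: "ideal A RR \<and> ideal B RR \<and> (\<forall>a\<in>A. \<forall>b\<in>B. a \<otimes>\<^bsub>RR\<^esub> b = \<zero>\<^bsub>RR\<^esub>)"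
  show "A = {\<zero>\<^bsub>RR\<^esub>} \<or> B = {\<zero>\<^bsub>RR\<^esub>}"
  proof (rule ccontr)
    assume "\<not> ?thesis"
    then have "rank_one b b \<in> A" "rank_one b b \<in> B"
      using SS_subset_ideal AB rank_one_in_SS by blast+
    then have "(rank_one b b \<circ> rank_one b b) b = 0" using AB by fastforce
    then show False using unit_b basis_nonzero[OF b] by simp
  qed
qed

text \<open>Being an essential proper right ideal, S has no complement: R is not semisimple.\<close>
lemma RR_not_semisimple: "\<not> semisimple_artinian RR"
proof
  assume "semisimple_artinian RR"
  moreover have "right_ideal SS RR" by (rule ring.ideal_imp_right_ideal[OF ring_RR ideal_SS])
  ultimately have "SS = carrier RR"
    using semisimple_essential_right_ideal[OF ring_RR] SS_essential by blast
  then show False using id_notin_SS id_in_RR by blast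
qed

text \<open>Since J(R) = 0, R is not semilocal.\<close>
lemma RR_not_semilocal: "\<not> semilocal RR"
  using ring.semilocal_iff_semisimple[OF ring_RR jacobson_RR] RR_not_semisimple by blast

end

text \<open>R is in particular neither right nor left perfect, as both require semilocality.\<close>
theorem mainTheorem11:
  fixes scale :: "'k::field \<Rightarrow> 'v::ab_group_add \<Rightarrow> 'v"
  assumes "vector_space scale"
    and "\<not> (\<exists>B. finite B \<and> module.span scale B = UNIV)"
  defines "S \<equiv> fin_rank_endos scale" and "R \<equiv> k_plus_S_ring scale"
  shows "{I. ideal I R} = {{\<zero>\<^bsub>R\<^esub>}, S, carrier R}
    \<and> prime_ring R
    \<and> right_almost_perfect R \<and> left_almost_perfect R
    \<and> jacobson R = {\<zero>\<^bsub>R\<^esub>}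
    \<and> \<not> semilocal R
    \<and> \<not> right_perfect R \<and> \<not> left_perfect R"
proof -
  interpret infinite_dimensional_vector_space scale
    using assms(1,2) by (simp add: infinite_dimensional_vector_space_def
        infinite_dimensional_vector_space_axioms_def)
  have "\<not> right_perfect R" "\<not> left_perfect R"
    using RR_not_semilocal by (auto simp: R_def right_perfect_def left_perfect_def)
  then show ?thesis
    using ideals_RR prime_RR RR_almost_perfect jacobson_RR RR_not_semilocal
    unfolding S_def R_def by (intro conjI)
qed

end
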